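(* Let $n\ge0$ and $x,y,z\in Q_n$. Then $[x,y,z]=[z,y,x]$.
   Context: Cayley--Dickson loops: $Q_0=\{1,-1\}\subset\mathbb{R}$ with conjugation $x^*=x$. For $n\ge1$, $Q_n=\{(x,0),(x,1)\mid x\in Q_{n-1}\}$ with multiplication $(x,0)(y,0)=(xy,0)$, $(x,0)(y,1)=(yx,1)$, $(x,1)(y,0)=(xy^*,1)$, $(x,1)(y,1)=(-y^*x,0)$ and conjugation $(x,0)^*=(x^*,0)$, $(x,1)^*=(-x,1)$, where $-(x,a)=(-x,a)$. $Q_n$ is a loop with neutral element $1=(1,0,\dots,0)$; $-1=(-1,0,\dots,0)$ commutes and associates with all elements and $-x=(-1)x$. The associator $[x,y,z]$ is defined by $(xy)z=(x(yz))[x,y,z]$; it always lies in $\{1,-1\}$. *)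

theory Defs
  imports Main
begin

text \<open>An element is a pair (s, bs) where
  s = True encodes the real sign -1 (s = False encodes +1), and bs is a list of bits.
  The element (x, a) of Q_n with x in Q_(n-1) and a in {0,1} is encoded by consing
  the bit a (True = 1) onto the bit list of x.\<close>

type_synonym cd = "bool \<times> bool list"

definition cd_one :: "nat \<Rightarrow> cd" where
  "cd_one n = (False, replicate n False)"

definition cd_neg :: "cd \<Rightarrow> cd" where
  "cd_neg x = (\<not> fst x, snd x)"

fun cd_conj :: "cd \<Rightarrow> cd" where
  "cd_conj (s, []) = (s, [])"
| "cd_conj (s, False # bs) = (let c = cd_conj (s, bs) in (fst c, False # snd c))"
| "cd_conj (s, True # bs) = (\<not> s, True # bs)"

lemma length_cd_conj [simp]: "length (snd (cd_conj x)) = length (snd x)"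
  by (induction x rule: cd_conj.induct) (auto simp: Let_def)

function cd_mult :: "cd \<Rightarrow> cd \<Rightarrow> cd" where
  "cd_mult (s, []) (t, bs) = (s \<noteq> t, [])"
| "cd_mult (s, a # as) (t, []) = (s \<noteq> t, [])"
| "cd_mult (s, False # as) (t, False # bs) =
     (let p = cd_mult (s, as) (t, bs) in (fst p, False # snd p))"
| "cd_mult (s, False # as) (t, True # bs) =
     (let p = cd_mult (t, bs) (s, as) in (fst p, True # snd p))"
| "cd_mult (s, True # as) (t, False # bs) =
     (let p = cd_mult (s, as) (cd_conj (t, bs)) in (fst p, True # snd p))"
| "cd_mult (s, True # as) (t, True # bs) =
     (let p = cd_neg (cd_mult (cd_conj (t, bs)) (s, as)) in (fst p, False # snd p))"
  by pat_completeness auto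
termination
  by (relation "measure (\<lambda>(x, y). length (snd x) + length (snd y))") auto

definition Q :: "nat \<Rightarrow> cd set" where
  "Q n = {x. length (snd x) = n}"

text \<open>The associator [x,y,z] in {1,-1}: (xy)z = (x(yz))[x,y,z].  Encoded as an
  integer 1 or -1 (multiplication by -1 is negation).\<close>
definition cd_assoc :: "cd \<Rightarrow> cd \<Rightarrow> cd \<Rightarrow> int" where
  "cd_assoc x y z =
     (if cd_mult (cd_mult x y) z = cd_mult x (cd_mult y z) then 1 else -1)"

end

theory Submission
  imports Defs
begin

text \<open>Conjugation is an anti-automorphism, (xy)* = y* x*, so conjugating both sides
  of (xy)z = x(yz) gives z*(y* x*) = (z* y*) x*, i.e. [x,y,z] = [z*,y*,x*].
  Since every conjugate x* is x or -x and -1 is central, conjugating all three arguments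
  does not change the associator.\<close>

lemma cd_neg_pair [simp]: "cd_neg (s, bs) = (\<not> s, bs)"
  by (simp add: cd_neg_def)

lemma cd_neg_inject [simp]: "cd_neg x = cd_neg y \<longleftrightarrow> x = y"
  by (auto simp: cd_neg_def prod_eq_iff)

lemma snd_cd_conj [simp]: "snd (cd_conj x) = snd x"
  by (induction x rule: cd_conj.induct) (auto simp: Let_def)

lemma cd_conj_pair_collapse [simp]: "(fst (cd_conj (s, bs)), bs) = cd_conj (s, bs)"
  by (metis prod.collapse snd_cd_conj snd_conv)

lemma length_cd_mult [simp]: "length (snd (cd_mult x y)) = min (length (snd x)) (length (snd y))"
  by (induction x y rule: cd_mult.induct) (auto simp: Let_def cd_neg_def)

lemma cd_conj_neg_sign [simp]: "cd_conj (\<not> s, bs) = cd_neg (cd_conj (s, bs))"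
proof (induction bs)
  case (Cons a bs)
  then show ?case
    by (cases a) (auto simp: Let_def cd_neg_def)
qed simp

lemma cd_conj_conj [simp]: "cd_conj (cd_conj x) = x"
proof (induction x rule: cd_conj.induct)
  case (2 s bs)
  then show ?case
    by (metis (no_types, lifting) cd_conj.simps(2) cd_conj_pair_collapse fst_conv)
qed simp_all

lemma cd_conj_inject: "cd_conj x = cd_conj y \<longleftrightarrow> x = y"
  by (metis cd_conj_conj)

lemma cd_conj_eq_self_or_neg: "cd_conj x = x \<or> cd_conj x = cd_neg x"
  by (induction x rule: cd_conj.induct) (auto simp: Let_def cd_neg_def)

lemma cd_mult_neg [simp]:
  "cd_mult (cd_neg x) y = cd_neg (cd_mult x y)"
  "cd_mult x (cd_neg y) = cd_neg (cd_mult x y)"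
proof -
  have "cd_mult (cd_neg x) y = cd_neg (cd_mult x y) \<and> cd_mult x (cd_neg y) = cd_neg (cd_mult x y)"
    by (induction x y rule: cd_mult.induct) (auto simp: Let_def cd_neg_def)
  then show "cd_mult (cd_neg x) y = cd_neg (cd_mult x y)" "cd_mult x (cd_neg y) = cd_neg (cd_mult x y)"
    by blast+
qed

(* The forms that remain after cd_neg_pair has rewritten cd_neg on explicit pairs. *)
lemma cd_mult_neg_sign [simp]:
  "cd_mult (\<not> s, as) y = cd_neg (cd_mult (s, as) y)"
  "cd_mult x (\<not> t, bs) = cd_neg (cd_mult x (t, bs))"
  using cd_mult_neg[of "(s, as)" y] cd_mult_neg[of x "(t, bs)"] by simp_all

lemma cd_conj_neg [simp]: "cd_conj (cd_neg x) = cd_neg (cd_conj x)"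
  by (cases x) simp

lemma cd_conj_mult:
  "length (snd x) = length (snd y) \<Longrightarrow> cd_conj (cd_mult x y) = cd_mult (cd_conj y) (cd_conj x)"
  by (induction x y rule: cd_mult.induct) (auto simp: Let_def cd_neg_def)

lemma cd_assoc_conj_rev:
  assumes "length (snd x) = length (snd y)" and "length (snd y) = length (snd z)"
  shows "cd_assoc x y z = cd_assoc (cd_conj z) (cd_conj y) (cd_conj x)"
proof -
  have "cd_mult (cd_mult x y) z = cd_mult x (cd_mult y z) \<longleftrightarrow>
        cd_conj (cd_mult (cd_mult x y) z) = cd_conj (cd_mult x (cd_mult y z))"
    by (simp add: cd_conj_inject)
  also have "\<dots> \<longleftrightarrow> cd_mult (cd_conj z) (cd_mult (cd_conj y) (cd_conj x)) =
                   cd_mult (cd_mult (cd_conj z) (cd_conj y)) (cd_conj x)"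
    using assms by (simp add: cd_conj_mult)
  finally show ?thesis
    by (auto simp: cd_assoc_def)
qed

lemma cd_assoc_conj: "cd_assoc (cd_conj x) (cd_conj y) (cd_conj z) = cd_assoc x y z"
  using cd_conj_eq_self_or_neg[of x] cd_conj_eq_self_or_neg[of y] cd_conj_eq_self_or_neg[of z]
  by (auto simp: cd_assoc_def simp del: cd_neg_pair)

theorem mainTheorem2:
  fixes n :: nat and x y z :: cd
  assumes "x \<in> Q n" and "y \<in> Q n" and "z \<in> Q n"
  shows "cd_assoc x y z = cd_assoc z y x"
proof -
  have "length (snd x) = length (snd y)" "length (snd y) = length (snd z)"
    using assms by (simp_all add: Q_def)
  then have "cd_assoc x y z = cd_assoc (cd_conj z) (cd_conj y) (cd_conj x)"
    by (rule cd_assoc_conj_rev)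
  then show ?thesis
    by (simp add: cd_assoc_conj)
qed

end
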